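(* Let $K$ be a metrizable, locally connected, compact Hausdorff space. Then for every pairwise disjoint sequence $(f_n)_{n\in\mathbb{N}}$ in $C_1(K)$, the extension $K((f_n)_{n\in\mathbb{N}})$ is a strong extension.
   Context: All spaces are Hausdorff. For a compact space $K$, $C_1(K)$ denotes the set of continuous functions $K\to[0,1]$; $f,g$ are disjoint if $f\cdot g=0$. For a real function $f$ on $K$, $supp(f)$ is the closure of $\{x\in K: f(x)\neq 0\}$. For a pairwise disjoint sequence $(f_n)_{n\in\mathbb{N}}$ in $C_1(K)$, let $D((f_n)_{n\in\mathbb{N}})$ be the union of all open sets $U\subseteq K$ such that $\{n: U\cap supp(f_n)\neq\emptyset\}$ is finite. The extension of $K$ by $(f_n)_{n\in\mathbb{N}}$, denoted $K((f_n)_{n\in\mathbb{N}})$, is the closure in $K\times[0,1]$ of the graph of the function $\sum_{n\in\mathbb{N}} f_n$ restricted to $D((f_n)_{n\in\mathbb{N}})$. The extension is called strong if it contains the graph of $\sum_{n\in\mathbb{N}} f_n$ on all of $K$. A space is locally connected if it has a basis of connected open sets. *)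

theory Defs
  imports "HOL-Analysis.Analysis"
begin

text \<open>$C_1(K)$: continuous functions $K \to [0,1]$ (K is the whole carrier type).\<close>
definition C1 :: "('a::topological_space \<Rightarrow> real) set" where
  "C1 = {f. continuous_on UNIV f \<and> (\<forall>x. 0 \<le> f x \<and> f x \<le> 1)}"

definition pairwise_disjoint_seq :: "(nat \<Rightarrow> 'a \<Rightarrow> real) \<Rightarrow> bool" where
  "pairwise_disjoint_seq f \<longleftrightarrow> (\<forall>m n. m \<noteq> n \<longrightarrow> (\<forall>x. f m x * f n x = 0))"

definition supp :: "('a::topological_space \<Rightarrow> real) \<Rightarrow> 'a set" where
  "supp f = closure {x. f x \<noteq> 0}"

definition Dset :: "(nat \<Rightarrow> 'a::topological_space \<Rightarrow> real) \<Rightarrow> 'a set" where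
  "Dset f = \<Union>{U. open U \<and> finite {n. U \<inter> supp (f n) \<noteq> {}}}"

definition sumf :: "(nat \<Rightarrow> 'a \<Rightarrow> real) \<Rightarrow> 'a \<Rightarrow> real" where
  "sumf f x = (\<Sum>n. f n x)"

text \<open>$K((f_n))$: closure in $K \times [0,1]$ of the graph of $\sum f_n$ on $D((f_n))$.
  Since $K \times [0,1]$ is closed in $K \times \mathbb{R}$ and the graph lies in it,
  the closure may be taken in $K \times \mathbb{R}$.\<close>
definition extension :: "(nat \<Rightarrow> 'a::topological_space \<Rightarrow> real) \<Rightarrow> ('a \<times> real) set" where
  "extension f = closure ((\<lambda>x. (x, sumf f x)) ` Dset f)"

definition strong_extension :: "(nat \<Rightarrow> 'a::topological_space \<Rightarrow> real) \<Rightarrow> bool" where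
  "strong_extension f \<longleftrightarrow> (\<lambda>x. (x, sumf f x)) ` UNIV \<subseteq> extension f"

end

theory Submission
  imports Defs
begin

text \<open>Away from \<open>D((f_n))\<close> every \<open>f_n\<close> vanishes, so the graph of \<open>\<Sum> f_n\<close> sits at height 0
  there; we show that \<open>(x, 0)\<close> is a limit of graph points over \<open>D((f_n))\<close>. Every connected
  neighbourhood \<open>U\<close> of such an \<open>x\<close> meets infinitely many supports, so some \<open>f_n\<close> takes a
  nonzero value on \<open>U\<close>; being connected, \<open>f_n(U)\<close> then contains arbitrarily small nonzero
  values \<open>t = f_n(z)\<close>. At such \<open>z\<close> the other \<open>f_k\<close> vanish, so \<open>\<Sum> f_k(z) = t\<close>, and \<open>z\<close> lies in
  \<open>D((f_n))\<close> since the open set \<open>{f_n \<noteq> 0}\<close> meets no other support.\<close>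

lemma pairwise_disjoint_seq_eq_0:
  assumes "pairwise_disjoint_seq f" "f m z \<noteq> 0" "k \<noteq> m"
  shows "f k z = 0"
  using assms unfolding pairwise_disjoint_seq_def by (metis mult_eq_0_iff)

lemma sumf_eq_nonzero_term:
  assumes "pairwise_disjoint_seq f" "f m z \<noteq> 0"
  shows "sumf f z = f m z"
proof -
  have "(\<lambda>k. f k z) = (\<lambda>k. if k = m then f k z else 0)"
    using pairwise_disjoint_seq_eq_0[OF assms] by auto
  then show ?thesis
    unfolding sumf_def using sums_single[of m "\<lambda>k. f k z"] sums_unique by metis
qed

lemma nonzero_in_Dset:
  assumes cont: "continuous_on UNIV (f m)" and disj: "pairwise_disjoint_seq f"
    and nz: "f m z \<noteq> 0"
  shows "z \<in> Dset f"
proof -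
  let ?U = "{w. f m w \<noteq> 0}"
  have open_U: "open ?U"
    using open_Collect_neq[OF cont continuous_on_const] by simp
  have "?U \<inter> supp (f n) = {}" if "n \<noteq> m" for n
    using pairwise_disjoint_seq_eq_0[OF disj _ that] open_Int_closure_eq_empty[OF open_U]
    unfolding supp_def by blast
  then have "finite {n. ?U \<inter> supp (f n) \<noteq> {}}"
    by (auto intro: finite_subset[of _ "{m}"])
  then show ?thesis
    unfolding Dset_def using open_U nz by blast
qed

lemma nonzero_near_complement_Dset:
  assumes "x \<notin> Dset f" "open U" "x \<in> U"
  obtains n y where "y \<in> U" "f n y \<noteq> 0"
proof -
  have "infinite {n. U \<inter> supp (f n) \<noteq> {}}"
    using assms unfolding Dset_def by blast
  then obtain n where "U \<inter> supp (f n) \<noteq> {}"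
    by (metis (mono_tags) Collect_empty_eq finite.emptyI)
  then have "U \<inter> {w. f n w \<noteq> 0} \<noteq> {}"
    unfolding supp_def using open_Int_closure_eq_empty[OF \<open>open U\<close>] by blast
  then show ?thesis using that by blast
qed

lemma connected_real_nonzero_near_0:
  fixes S :: "real set"
  assumes "connected S" "0 \<in> S" "c \<in> S" "c \<noteq> 0" "e > 0"
  obtains t where "t \<in> S" "t \<noteq> 0" "\<bar>t\<bar> < e"
proof (cases "c > 0")
  case True
  have "min c (e/2) \<in> S"
    using connected_contains_Icc[OF assms(1-3)] True \<open>e > 0\<close> by auto
  then show ?thesis using that True \<open>e > 0\<close> by auto
next
  case False
  have "max c (-e/2) \<in> S"
    using connected_contains_Icc[OF assms(1,3,2)] False \<open>e > 0\<close> by auto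
  then show ?thesis using that False \<open>c \<noteq> 0\<close> \<open>e > 0\<close> by auto
qed

lemma extension_contains_zero_outside_Dset:
  assumes lc: "locally_connected_space (euclidean :: 'a::topological_space topology)"
    and cont: "\<And>n. continuous_on UNIV (f n)" and disj: "pairwise_disjoint_seq f"
    and x: "x \<notin> Dset (f :: nat \<Rightarrow> 'a \<Rightarrow> real)"
  shows "(x, 0) \<in> extension f"
  unfolding extension_def closure_iff_nhds_not_empty
proof (intro allI impI)
  let ?G = "(\<lambda>x. (x, sumf f x)) ` Dset f"
  fix A S assume "S \<subseteq> A" "open S" "(x, 0::real) \<in> S"
  then obtain V B where "open V" "open B" "x \<in> V" "0 \<in> B" and VB: "V \<times> B \<subseteq> S"
    by (metis open_prod_elim mem_Sigma_iff)
  then obtain e where "e > 0" and e: "ball 0 e \<subseteq> B"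
    using open_contains_ball by blast
  obtain U where "open U" "connected U" "x \<in> U" "U \<subseteq> V"
    using lc \<open>open V\<close> \<open>x \<in> V\<close> unfolding locally_connected_space
    by (metis connectedin_iff_connected open_openin subtopology_UNIV)
  obtain n y where "y \<in> U" "f n y \<noteq> 0"
    using nonzero_near_complement_Dset[OF x \<open>open U\<close> \<open>x \<in> U\<close>] .
  have "f n x = 0"
    using nonzero_in_Dset[OF cont disj] x by blast
  have "connected (f n ` U)"
    using connected_continuous_image[OF continuous_on_subset[OF cont] \<open>connected U\<close>] by blast
  then obtain t where "t \<in> f n ` U" "t \<noteq> 0" "\<bar>t\<bar> < e"
    using connected_real_nonzero_near_0 \<open>x \<in> U\<close> \<open>y \<in> U\<close> \<open>f n x = 0\<close> \<open>f n y \<noteq> 0\<close> \<open>e > 0\<close>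
    by (metis image_eqI)
  then obtain z where "z \<in> U" "f n z = t" by blast
  then have "z \<in> Dset f" "sumf f z = t"
    using nonzero_in_Dset[OF cont disj] sumf_eq_nonzero_term[OF disj] \<open>t \<noteq> 0\<close> by auto
  moreover have "t \<in> B"
    using e \<open>\<bar>t\<bar> < e\<close> by (auto simp: dist_real_def)
  ultimately have "(z, sumf f z) \<in> ?G \<inter> S"
    using VB \<open>z \<in> U\<close> \<open>U \<subseteq> V\<close> by blast
  then show "?G \<inter> A \<noteq> {}" using \<open>S \<subseteq> A\<close> by blast
qed

theorem theorem3p1:
  fixes f :: "nat \<Rightarrow> 'a::t2_space \<Rightarrow> real"
  assumes "compact (UNIV :: 'a set)"
    and "metrizable_space (euclidean :: 'a topology)"
    and lc: "locally_connected_space (euclidean :: 'a topology)"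
    and C1: "\<And>n. f n \<in> C1"
    and disj: "pairwise_disjoint_seq f"
  shows "strong_extension f"
  unfolding strong_extension_def
proof clarify
  fix x
  have cont: "continuous_on UNIV (f n)" for n
    using C1 by (simp add: C1_def)
  show "(x, sumf f x) \<in> extension f"
  proof (cases "x \<in> Dset f")
    case True
    then show ?thesis
      unfolding extension_def by (blast intro: closure_subset[THEN subsetD])
  next
    case False
    then have "f n x = 0" for n
      using nonzero_in_Dset[OF cont disj] by blast
    then have "sumf f x = 0" by (simp add: sumf_def)
    then show ?thesis
      using extension_contains_zero_outside_Dset[OF lc cont disj False] by simp
  qed
qed

end
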